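(* Fix $K>0$ and $z\in\mathbb{C}$, and assume $b_n\ge m\ge m_0$ for a sufficiently large constant $m_0$. For all sufficiently large $n$ (depending on $K$) the following holds on the event $\mathcal{E}_K$: for every unit vector $v\in\mathbb{C}^n$ that is orthogonal to $\mathcal{H}_1$, and for every $i\in[m-1]$, either $\|v_{[i]}\|\ge b_n^{-10m}m^{-1/2}$ or $\|v_{[i+1]}\|\ge b_n^{-10m}m^{-1/2}$.
   Context: Let $b_n$ divide $n$, $m=n/b_n$, $c_n=3b_n$. Let $\tilde D_i,\tilde U_i,\tilde T_i$ ($i\in[m]$) be $b_n\times b_n$ matrices, $D_i=\tilde D_i/\sqrt{c_n}$, $U_i=\tilde U_i/\sqrt{c_n}$, $T_i=\tilde T_i/\sqrt{c_n}$, $(D_i)_z=D_i-zI_{b_n}$. Let $X$ be the $n\times n$ block matrix ($m\times m$ blocks of size $b_n$, block indices modulo $m$) with $(i,i)$ block $D_i$, $(i,i-1)$ block $T_{i-1}$, $(i,i+1)$ block $U_{i+1}$, other blocks zero, and $X_z=X-zI$. $\mathcal{H}_1$ is the span of all rows of $X_z$ except the first. $\mathcal{E}_K$ is the event that for all $i\in[m]$: $\|U_i\|,\|(D_i)_z\|,\|T_i\|\le K$ and the smallest singular values satisfy $s_{b_n}(U_i),s_{b_n}(T_i)\ge b_n^{-5}$. For $v\in\mathbb{C}^n$, $v_{[1]},\dots,v_{[m]}\in\mathbb{C}^{b_n}$ are the consecutive blocks of $b_n$ coordinates of $v$. *)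

theory Defs
  imports Complex_Main
begin

text \<open>Vectors in C^k are functions nat \<Rightarrow> complex, only coordinates 0..k-1 matter.
  A k x k matrix is a function nat \<Rightarrow> nat \<Rightarrow> complex (row, column), entries with indices < k matter.
  Block families (D_i, U_i, T_i) are functions from the 1-based block index i \<in> {1..m} to matrices.\<close>

definition vnorm :: "nat \<Rightarrow> (nat \<Rightarrow> complex) \<Rightarrow> real" where
  "vnorm k x = sqrt (\<Sum>j<k. (cmod (x j))\<^sup>2)"

definition mulv :: "nat \<Rightarrow> (nat \<Rightarrow> nat \<Rightarrow> complex) \<Rightarrow> (nat \<Rightarrow> complex) \<Rightarrow> (nat \<Rightarrow> complex)" where
  "mulv k A x = (\<lambda>p. \<Sum>q<k. A p q * x q)"

definition opnorm :: "nat \<Rightarrow> (nat \<Rightarrow> nat \<Rightarrow> complex) \<Rightarrow> real" where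
  "opnorm k A = Sup {vnorm k (mulv k A x) | x. vnorm k x = 1}"

definition smin :: "nat \<Rightarrow> (nat \<Rightarrow> nat \<Rightarrow> complex) \<Rightarrow> real" where
  "smin k A = Inf {vnorm k (mulv k A x) | x. vnorm k x = 1}"

text \<open>Scaled blocks D_i = tilde D_i / sqrt(c_n), c_n = 3 b_n.\<close>
definition scaleb :: "nat \<Rightarrow> (nat \<Rightarrow> nat \<Rightarrow> nat \<Rightarrow> complex) \<Rightarrow> (nat \<Rightarrow> nat \<Rightarrow> nat \<Rightarrow> complex)" where
  "scaleb b M = (\<lambda>i p q. M i p q / complex_of_real (sqrt (real (3 * b))))"

definition prevb :: "nat \<Rightarrow> nat \<Rightarrow> nat" where
  "prevb m i = (if i = 1 then m else i - 1)"

definition nextb :: "nat \<Rightarrow> nat \<Rightarrow> nat" where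
  "nextb m i = (if i = m then 1 else i + 1)"

text \<open>The n x n block matrix X (n = m b), with 0-based entry indices r, c < n:
  block (i,i) = D_i, block (i,i-1) = T_{i-1}, block (i,i+1) = U_{i+1} (indices mod m).\<close>
definition Xmat :: "nat \<Rightarrow> nat \<Rightarrow> (nat \<Rightarrow> nat \<Rightarrow> nat \<Rightarrow> complex) \<Rightarrow> (nat \<Rightarrow> nat \<Rightarrow> nat \<Rightarrow> complex)
    \<Rightarrow> (nat \<Rightarrow> nat \<Rightarrow> nat \<Rightarrow> complex) \<Rightarrow> nat \<Rightarrow> nat \<Rightarrow> complex" where
  "Xmat b m D U T r c =
     (let I = r div b + 1; J = c div b + 1; p = r mod b; q = c mod b in
       (if J = I then D I p q else 0)
     + (if J = prevb m I then T (prevb m I) p q else 0)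
     + (if J = nextb m I then U (nextb m I) p q else 0))"

definition Xz :: "nat \<Rightarrow> nat \<Rightarrow> (nat \<Rightarrow> nat \<Rightarrow> nat \<Rightarrow> complex) \<Rightarrow> (nat \<Rightarrow> nat \<Rightarrow> nat \<Rightarrow> complex)
    \<Rightarrow> (nat \<Rightarrow> nat \<Rightarrow> nat \<Rightarrow> complex) \<Rightarrow> complex \<Rightarrow> nat \<Rightarrow> nat \<Rightarrow> complex" where
  "Xz b m D U T z r c = Xmat b m D U T r c - (if r = c then z else 0)"

definition H1 :: "nat \<Rightarrow> nat \<Rightarrow> (nat \<Rightarrow> nat \<Rightarrow> nat \<Rightarrow> complex) \<Rightarrow> (nat \<Rightarrow> nat \<Rightarrow> nat \<Rightarrow> complex)
    \<Rightarrow> (nat \<Rightarrow> nat \<Rightarrow> nat \<Rightarrow> complex) \<Rightarrow> complex \<Rightarrow> (nat \<Rightarrow> complex) set" where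
  "H1 b m D U T z = {(\<lambda>c. \<Sum>r\<in>{1..<m*b}. a r * Xz b m D U T z r c) | a. True}"

definition cinner :: "nat \<Rightarrow> (nat \<Rightarrow> complex) \<Rightarrow> (nat \<Rightarrow> complex) \<Rightarrow> complex" where
  "cinner n x y = (\<Sum>j<n. x j * cnj (y j))"

definition orth_to :: "nat \<Rightarrow> (nat \<Rightarrow> complex) \<Rightarrow> (nat \<Rightarrow> complex) set \<Rightarrow> bool" where
  "orth_to n v H \<longleftrightarrow> (\<forall>h\<in>H. cinner n v h = 0)"

definition blocknorm :: "nat \<Rightarrow> (nat \<Rightarrow> complex) \<Rightarrow> nat \<Rightarrow> real" where
  "blocknorm b v i = vnorm b (\<lambda>p. v ((i - 1) * b + p))"

text \<open>The event E_K, for D_i, U_i, T_i (already scaled).\<close>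
definition eventE :: "real \<Rightarrow> complex \<Rightarrow> nat \<Rightarrow> nat \<Rightarrow> (nat \<Rightarrow> nat \<Rightarrow> nat \<Rightarrow> complex)
    \<Rightarrow> (nat \<Rightarrow> nat \<Rightarrow> nat \<Rightarrow> complex) \<Rightarrow> (nat \<Rightarrow> nat \<Rightarrow> nat \<Rightarrow> complex) \<Rightarrow> bool" where
  "eventE K z b m D U T \<longleftrightarrow>
     (\<forall>i\<in>{1..m}.
        opnorm b (U i) \<le> K \<and>
        opnorm b (\<lambda>p q. D i p q - (if p = q then z else 0)) \<le> K \<and>
        opnorm b (T i) \<le> K \<and>
        smin b (U i) \<ge> 1 / real b ^ 5 \<and>
        smin b (T i) \<ge> 1 / real b ^ 5)"

end

(* Orthogonality of v to H_1 says that w = conj v is annihilated by every row of X_z except the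
   first. In block row I, 1 < I < m, this is the three-term relation
     T_(I-1) w_[I-1] + (D_I - z) w_[I] + U_(I+1) w_[I+1] = 0.
   Since s_b(U_i), s_b(T_i) >= b^-5 and all blocks have norm at most K, each block norm is at most
   C = b^5 K times the sum of the two block norms next to it on either side. Starting from two
   adjacent blocks of norm at most e, every block therefore has norm at most (2C+1)^m e <= b^(10m) e,
   and |v| = 1 forces e >= b^(-10m) m^(-1/2). *)

theory Submission
  imports Defs "HOL-Analysis.L2_Norm"
begin

lemma vnorm_L2_set: "vnorm k x = L2_set (\<lambda>j. cmod (x j)) {..<k}"
  by (simp add: vnorm_def L2_set_def)

lemma vnorm_nonneg: "0 \<le> vnorm k x"
  by (simp add: vnorm_def sum_nonneg)

lemma vnorm_cong: "(\<And>j. j < k \<Longrightarrow> x j = y j) \<Longrightarrow> vnorm k x = vnorm k y"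
  by (simp add: vnorm_def)

lemma vnorm_uminus: "vnorm k (\<lambda>j. - x j) = vnorm k x"
  by (simp add: vnorm_def)

lemma vnorm_cnj: "vnorm k (\<lambda>j. cnj (x j)) = vnorm k x"
  by (simp add: vnorm_def)

lemma vnorm_mult: "vnorm k (\<lambda>j. c * x j) = cmod c * vnorm k x"
  unfolding vnorm_L2_set by (simp add: L2_set_right_distrib norm_mult)

lemma vnorm_add_le: "vnorm k (\<lambda>j. x j + y j) \<le> vnorm k x + vnorm k y"
proof -
  have "vnorm k (\<lambda>j. x j + y j) \<le> L2_set (\<lambda>j. cmod (x j) + cmod (y j)) {..<k}"
    unfolding vnorm_L2_set by (rule L2_set_mono) (auto simp: norm_triangle_ineq)
  also have "\<dots> \<le> vnorm k x + vnorm k y"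
    unfolding vnorm_L2_set by (rule L2_set_triangle_ineq)
  finally show ?thesis .
qed

lemma norm_le_vnorm: "j < k \<Longrightarrow> cmod (x j) \<le> vnorm k x"
  unfolding vnorm_L2_set by (rule member_le_L2_set) auto

lemma mulv_mult_right: "mulv k A (\<lambda>j. c * x j) = (\<lambda>p. c * mulv k A x p)"
  by (simp add: mulv_def sum_distrib_left algebra_simps)

lemma vnorm_mulv_eq_0: "vnorm k x = 0 \<Longrightarrow> vnorm k (mulv k A x) = 0"
  unfolding vnorm_L2_set mulv_def by (simp add: L2_set_eq_0_iff)

lemma vnorm_mulv_normalize:
  assumes "vnorm k x \<noteq> 0"
  obtains y where "vnorm k y = 1" "vnorm k (mulv k A x) = vnorm k x * vnorm k (mulv k A y)"
proof
  let ?c = "complex_of_real (1 / vnorm k x)"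
  show "vnorm k (\<lambda>j. ?c * x j) = 1"
    using assms vnorm_nonneg[of k x] unfolding vnorm_mult by (simp add: norm_divide)
  show "vnorm k (mulv k A x) = vnorm k x * vnorm k (mulv k A (\<lambda>j. ?c * x j))"
    using assms vnorm_nonneg[of k x] unfolding mulv_mult_right vnorm_mult by (simp add: norm_divide)
qed

lemma bdd_above_vnorm_mulv: "bdd_above {vnorm k (mulv k A x) | x. vnorm k x = 1}"
proof (rule bdd_aboveI)
  fix s assume "s \<in> {vnorm k (mulv k A x) | x. vnorm k x = 1}"
  then obtain x where x: "vnorm k x = 1" and s: "s = vnorm k (mulv k A x)" by blast
  have "vnorm k (mulv k A x) \<le> L2_set (\<lambda>p. \<Sum>q<k. cmod (A p q)) {..<k}"
    unfolding vnorm_L2_set[of k "mulv k A x"]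
  proof (rule L2_set_mono)
    fix p
    have "cmod (mulv k A x p) \<le> (\<Sum>q<k. cmod (A p q * x q))"
      unfolding mulv_def by (rule norm_sum)
    also have "\<dots> \<le> (\<Sum>q<k. cmod (A p q))"
      using norm_le_vnorm[of _ k x] x by (intro sum_mono) (simp add: norm_mult mult_left_le)
    finally show "cmod (mulv k A x p) \<le> (\<Sum>q<k. cmod (A p q))" .
  qed simp
  then show "s \<le> L2_set (\<lambda>p. \<Sum>q<k. cmod (A p q)) {..<k}"
    using s by simp
qed

lemma vnorm_mulv_le_opnorm: "vnorm k (mulv k A x) \<le> opnorm k A * vnorm k x"
proof (cases "vnorm k x = 0")
  case True
  then show ?thesis by (simp add: vnorm_mulv_eq_0)
next
  case False
  then obtain y where y: "vnorm k y = 1"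
    and Ax: "vnorm k (mulv k A x) = vnorm k x * vnorm k (mulv k A y)"
    by (rule vnorm_mulv_normalize)
  have "vnorm k (mulv k A y) \<le> opnorm k A"
    unfolding opnorm_def using y by (intro cSup_upper bdd_above_vnorm_mulv) blast
  then show ?thesis
    using Ax vnorm_nonneg[of k x] by (metis mult.commute mult_left_mono)
qed

lemma smin_le_vnorm_mulv: "smin k A * vnorm k x \<le> vnorm k (mulv k A x)"
proof (cases "vnorm k x = 0")
  case True
  then show ?thesis by (simp add: vnorm_nonneg)
next
  case False
  then obtain y where y: "vnorm k y = 1"
    and Ax: "vnorm k (mulv k A x) = vnorm k x * vnorm k (mulv k A y)"
    by (rule vnorm_mulv_normalize)
  have "smin k A \<le> vnorm k (mulv k A y)"
    unfolding smin_def using y vnorm_nonneg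
    by (intro cInf_lower) (blast, auto intro: bdd_belowI[of _ 0])
  then show ?thesis
    using Ax vnorm_nonneg[of k x] by (metis mult.commute mult_left_mono)
qed

lemma smin_vnorm_le_three_term:
  assumes "\<And>p. p < k \<Longrightarrow> mulv k A x p + mulv k B y p + mulv k C u p = 0"
  shows "smin k A * vnorm k x \<le> opnorm k B * vnorm k y + opnorm k C * vnorm k u"
proof -
  have "vnorm k (mulv k A x) = vnorm k (\<lambda>p. - (mulv k B y p + mulv k C u p))"
    by (intro vnorm_cong) (metis add.assoc assms eq_neg_iff_add_eq_0)
  also have "\<dots> \<le> vnorm k (mulv k B y) + vnorm k (mulv k C u)"
    unfolding vnorm_uminus by (rule vnorm_add_le)
  also have "\<dots> \<le> opnorm k B * vnorm k y + opnorm k C * vnorm k u"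
    by (intro add_mono vnorm_mulv_le_opnorm)
  finally show ?thesis
    using smin_le_vnorm_mulv order_trans by blast
qed

definition block :: "nat \<Rightarrow> (nat \<Rightarrow> complex) \<Rightarrow> nat \<Rightarrow> nat \<Rightarrow> complex" where
  "block b w J = (\<lambda>q. w ((J - 1) * b + q))"

lemma blocknorm_eq_vnorm_block_cnj: "blocknorm b v J = vnorm b (block b (\<lambda>j. cnj (v j)) J)"
  by (simp add: blocknorm_def block_def vnorm_cnj)

lemma sum_lessThan_mult_blocks:
  fixes f :: "nat \<Rightarrow> 'a::comm_monoid_add"
  shows "(\<Sum>j<m*b. f j) = (\<Sum>J=1..m. \<Sum>q<b. f ((J - 1) * b + q))"
proof -
  have "(\<Sum>j<m*b. f j) = (\<Sum>J<m. sum f {J*b..<J*b+b})"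
    by (rule sum.nat_group[symmetric])
  also have "\<dots> = (\<Sum>J<m. \<Sum>q<b. f (J * b + q))"
  proof (rule sum.cong[OF refl])
    fix J
    show "sum f {J*b..<J*b+b} = (\<Sum>q<b. f (J*b+q))"
      using sum.shift_bounds_nat_ivl[of f 0 "J*b" b] by (simp add: atLeast0LessThan add.commute)
  qed
  also have "\<dots> = (\<Sum>J=1..m. \<Sum>q<b. f ((J - 1) * b + q))"
    by (simp add: sum.atLeast1_atMost_eq)
  finally show ?thesis .
qed

lemma Xz_block_entry:
  assumes "1 \<le> I" "1 \<le> J" "p < b" "q < b"
  shows "Xz b m D U T z ((I - 1) * b + p) ((J - 1) * b + q) =
      (if J = I then D I p q - (if p = q then z else 0) else 0)
    + (if J = prevb m I then T J p q else 0)
    + (if J = nextb m I then U J p q else 0)"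
proof -
  have "((I - 1) * b + p) div b + 1 = I" "((I - 1) * b + p) mod b = p"
       "((J - 1) * b + q) div b + 1 = J" "((J - 1) * b + q) mod b = q"
    using assms by auto
  moreover have "(I - 1) * b + p = (J - 1) * b + q \<longleftrightarrow> J = I \<and> q = p"
    by (metis calculation)
  ultimately show ?thesis
    unfolding Xz_def Xmat_def Let_def by auto
qed

lemma sum_blocks_delta:
  fixes f g :: "nat \<Rightarrow> nat \<Rightarrow> 'a::semiring_0"
  assumes "J0 \<in> {1..m}"
  shows "(\<Sum>J=1..m. \<Sum>q<b. (if J = J0 then f J q else 0) * g J q) = (\<Sum>q<b. f J0 q * g J0 q)"
proof -
  have "(\<Sum>J=1..m. \<Sum>q<b. (if J = J0 then f J q else 0) * g J q)
      = (\<Sum>J=1..m. if J = J0 then \<Sum>q<b. f J q * g J q else 0)"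
    by (rule sum.cong) auto
  then show ?thesis
    using assms by simp
qed

lemma Xz_block_row:
  assumes I: "I \<in> {1..m}" and p: "p < b"
  shows "(\<Sum>c<m*b. Xz b m D U T z ((I - 1) * b + p) c * w c) =
      mulv b (T (prevb m I)) (block b w (prevb m I)) p
    + mulv b (\<lambda>p q. D I p q - (if p = q then z else 0)) (block b w I) p
    + mulv b (U (nextb m I)) (block b w (nextb m I)) p"
proof -
  let ?w = "\<lambda>J q. w ((J - 1) * b + q)"
  have block_idx: "I \<in> {1..m}" "prevb m I \<in> {1..m}" "nextb m I \<in> {1..m}"
    using I by (auto simp: prevb_def nextb_def)
  have "(\<Sum>c<m*b. Xz b m D U T z ((I - 1) * b + p) c * w c)
      = (\<Sum>J=1..m. \<Sum>q<b. Xz b m D U T z ((I - 1) * b + p) ((J - 1) * b + q) * ?w J q)"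
    by (rule sum_lessThan_mult_blocks)
  also have "\<dots> = (\<Sum>J=1..m. \<Sum>q<b.
        (if J = I then D I p q - (if p = q then z else 0) else 0) * ?w J q
      + (if J = prevb m I then T J p q else 0) * ?w J q
      + (if J = nextb m I then U J p q else 0) * ?w J q)"
    using I p by (intro sum.cong refl) (simp only: Xz_block_entry distrib_right atLeastAtMost_iff lessThan_iff)
  also have "\<dots> = (\<Sum>J=1..m. \<Sum>q<b. (if J = I then D I p q - (if p = q then z else 0) else 0) * ?w J q)
      + (\<Sum>J=1..m. \<Sum>q<b. (if J = prevb m I then T J p q else 0) * ?w J q)
      + (\<Sum>J=1..m. \<Sum>q<b. (if J = nextb m I then U J p q else 0) * ?w J q)"
    by (simp only: sum.distrib)
  also have "\<dots> = mulv b (T (prevb m I)) (block b w (prevb m I)) p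
    + mulv b (\<lambda>p q. D I p q - (if p = q then z else 0)) (block b w I) p
    + mulv b (U (nextb m I)) (block b w (nextb m I)) p"
    unfolding sum_blocks_delta[OF block_idx(1)] sum_blocks_delta[OF block_idx(2)] sum_blocks_delta[OF block_idx(3)]
    by (simp add: mulv_def block_def add_ac)
  finally show ?thesis .
qed

lemma orth_H1_row:
  assumes "orth_to (m*b) v (H1 b m D U T z)" "1 \<le> r" "r < m*b"
  shows "(\<Sum>c<m*b. Xz b m D U T z r c * cnj (v c)) = 0"
proof -
  have "(\<lambda>c. \<Sum>r'\<in>{1..<m*b}. of_bool (r' = r) * Xz b m D U T z r' c) \<in> H1 b m D U T z"
    unfolding H1_def by (intro CollectI exI[of _ "\<lambda>r'. of_bool (r' = r)"]) simp
  moreover have "(\<lambda>c. \<Sum>r'\<in>{1..<m*b}. of_bool (r' = r) * Xz b m D U T z r' c)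
      = Xz b m D U T z r"
    using assms(2,3) by (simp add: fun_eq_iff)
  ultimately have "cinner (m*b) v (Xz b m D U T z r) = 0"
    using assms(1) unfolding orth_to_def by metis
  then have "cnj (cinner (m*b) v (Xz b m D U T z r)) = 0"
    by simp
  then show ?thesis
    by (simp add: cinner_def mult.commute)
qed

lemma interior_block_relation:
  fixes v :: "nat \<Rightarrow> complex"
  defines "w \<equiv> \<lambda>j. cnj (v j)"
  assumes orth: "orth_to (m*b) v (H1 b m D U T z)" and I: "2 \<le> I" "I < m" and p: "p < b"
  shows "mulv b (U (I + 1)) (block b w (I + 1)) p
       + mulv b (T (I - 1)) (block b w (I - 1)) p
       + mulv b (\<lambda>p q. D I p q - (if p = q then z else 0)) (block b w I) p = 0"
proof -
  have "1 \<le> (I - 1) * b + p"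
    using I p by (simp add: Suc_le_eq)
  moreover have "(I - 1) * b + p < m * b"
  proof -
    have "(I - 1) * b + p < I * b"
      using I p by (cases I) auto
    also have "\<dots> \<le> m * b"
      using I by simp
    finally show ?thesis .
  qed
  ultimately have row: "(\<Sum>c<m*b. Xz b m D U T z ((I - 1) * b + p) c * w c) = 0"
    unfolding w_def by (rule orth_H1_row[OF orth])
  have "I \<in> {1..m}"
    using I by simp
  with row have "mulv b (T (prevb m I)) (block b w (prevb m I)) p
    + mulv b (\<lambda>p q. D I p q - (if p = q then z else 0)) (block b w I) p
    + mulv b (U (nextb m I)) (block b w (nextb m I)) p = 0"
    by (simp only: Xz_block_row p)
  moreover have "prevb m I = I - 1" "nextb m I = I + 1"
    using I by (auto simp: prevb_def nextb_def)
  ultimately show ?thesis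
    by (simp add: add_ac)
qed

lemma vnorm_squared_blocknorms: "(vnorm (m*b) v)\<^sup>2 = (\<Sum>J=1..m. (blocknorm b v J)\<^sup>2)"
  by (simp add: vnorm_def blocknorm_def sum_nonneg sum_lessThan_mult_blocks[of _ m b])

lemma le_mult_of_inverse_le:
  fixes \<beta> s x y :: real
  assumes "1 / \<beta> \<le> s" "s * x \<le> y" "0 \<le> x" "0 < \<beta>"
  shows "x \<le> \<beta> * y"
proof -
  have "x / \<beta> \<le> y"
    using assms mult_right_mono[of "1 / \<beta>" s x] by simp
  then show ?thesis
    using assms(4) by (simp add: field_simps)
qed

lemma blocknorm_recurrences:
  assumes E: "eventE K z b m D U T" and orth: "orth_to (m*b) v (H1 b m D U T z)"
    and b: "0 < b" and I: "2 \<le> I" "I < m"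
  shows "blocknorm b v (I + 1) \<le> real b ^ 5 * K * (blocknorm b v (I - 1) + blocknorm b v I)"
    and "blocknorm b v (I - 1) \<le> real b ^ 5 * K * (blocknorm b v I + blocknorm b v (I + 1))"
proof -
  let ?w = "\<lambda>j. cnj (v j)"
  let ?a = "\<lambda>J. vnorm b (block b ?w J)"
  let ?Dz = "\<lambda>p q. D I p q - (if p = q then z else 0)"
  have bounds: "opnorm b (U J) \<le> K" "opnorm b (T J) \<le> K" "opnorm b (\<lambda>p q. D J p q - (if p = q then z else 0)) \<le> K"
      "1 / real b ^ 5 \<le> smin b (U J)" "1 / real b ^ 5 \<le> smin b (T J)" if "J \<in> {1..m}" for J
    using E that unfolding eventE_def by auto
  have block_idx: "I - 1 \<in> {1..m}" "I \<in> {1..m}" "I + 1 \<in> {1..m}"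
    using I by auto
  have rel: "mulv b (U (I + 1)) (block b ?w (I + 1)) p + mulv b (T (I - 1)) (block b ?w (I - 1)) p
       + mulv b ?Dz (block b ?w I) p = 0" if "p < b" for p
    using interior_block_relation[OF orth I that] .
  have "smin b (U (I + 1)) * ?a (I + 1) \<le> opnorm b (T (I - 1)) * ?a (I - 1) + opnorm b ?Dz * ?a I"
    by (rule smin_vnorm_le_three_term) (rule rel)
  also have "\<dots> \<le> K * (?a (I - 1) + ?a I)"
    unfolding distrib_left by (intro add_mono mult_right_mono vnorm_nonneg bounds block_idx)
  finally show "blocknorm b v (I + 1) \<le> real b ^ 5 * K * (blocknorm b v (I - 1) + blocknorm b v I)"
    unfolding blocknorm_eq_vnorm_block_cnj mult.assoc
    by (rule le_mult_of_inverse_le[OF bounds(4)[OF block_idx(3)] _ vnorm_nonneg]) (use b in simp)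
  have "smin b (T (I - 1)) * ?a (I - 1) \<le> opnorm b ?Dz * ?a I + opnorm b (U (I + 1)) * ?a (I + 1)"
    by (rule smin_vnorm_le_three_term) (use rel in \<open>simp add: add_ac\<close>)
  also have "\<dots> \<le> K * (?a I + ?a (I + 1))"
    unfolding distrib_left by (intro add_mono mult_right_mono vnorm_nonneg bounds block_idx)
  finally show "blocknorm b v (I - 1) \<le> real b ^ 5 * K * (blocknorm b v I + blocknorm b v (I + 1))"
    unfolding blocknorm_eq_vnorm_block_cnj mult.assoc
    by (rule le_mult_of_inverse_le[OF bounds(5)[OF block_idx(1)] _ vnorm_nonneg]) (use b in simp)
qed

lemma recurrence_growth_bound:
  fixes x :: "nat \<Rightarrow> real"
  assumes "x 0 \<le> e" "x 1 \<le> e" "0 \<le> e" "0 \<le> C"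
    and rec: "\<And>k. k + 2 \<le> N \<Longrightarrow> x (k + 2) \<le> C * (x k + x (k + 1))"
  shows "k \<le> N \<Longrightarrow> x k \<le> (2 * C + 1) ^ k * e"
proof (induction k rule: less_induct)
  case (less k)
  let ?L = "2 * C + 1"
  consider "k = 0" | "k = 1" | j where "k = j + 2"
    by (metis One_nat_def add_2_eq_Suc' not0_implies_Suc)
  then show ?case
  proof cases
    case 3
    have "x k \<le> C * (x j + x (j + 1))"
      using rec[of j] 3 less.prems by simp
    also have "\<dots> \<le> C * (?L ^ j * e + ?L ^ (j + 1) * e)"
      using less.IH[of j] less.IH[of "j + 1"] 3 less.prems assms(4)
      by (intro mult_left_mono add_mono) auto
    also have "\<dots> \<le> ?L * (?L ^ (j + 1) * e)"
    proof -
      have "C * (?L ^ j * e) \<le> C * (?L ^ (j + 1) * e)"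
        by (intro mult_left_mono mult_right_mono power_increasing) (use assms(3,4) in auto)
      moreover have "0 \<le> ?L ^ (j + 1) * e"
        using assms(3,4) by simp
      ultimately show ?thesis
        by (simp add: algebra_simps)
    qed
    finally show ?thesis
      using 3 by simp
  next
    case 2
    have "e \<le> ?L * e"
      using mult_right_mono[of 1 ?L e] assms(3,4) by simp
    then show ?thesis
      using 2 assms(2) by simp
  qed (use assms(1) in simp)
qed

lemma two_sided_recurrence_bound:
  fixes a :: "nat \<Rightarrow> real"
  assumes i: "1 \<le> i" "i < m" and small: "a i \<le> e" "a (i + 1) \<le> e" and e: "0 \<le> e" and C: "0 \<le> C"
    and fwd: "\<And>I. 2 \<le> I \<Longrightarrow> I < m \<Longrightarrow> a (I + 1) \<le> C * (a (I - 1) + a I)"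
    and bwd: "\<And>I. 2 \<le> I \<Longrightarrow> I < m \<Longrightarrow> a (I - 1) \<le> C * (a I + a (I + 1))"
    and J: "J \<in> {1..m}"
  shows "a J \<le> (2 * C + 1) ^ m * e"
proof -
  let ?L = "2 * C + 1"
  have mono: "?L ^ k * e \<le> ?L ^ m * e" if "k \<le> m" for k
    by (rule mult_right_mono[OF power_increasing]) (use that C e in auto)
  show ?thesis
  proof (cases "i \<le> J")
    case True
    have "a (i + (J - i)) \<le> ?L ^ (J - i) * e"
    proof (rule recurrence_growth_bound[of "\<lambda>k. a (i + k)" e C "m - i"])
      fix k assume "k + 2 \<le> m - i"
      then show "a (i + (k + 2)) \<le> C * (a (i + k) + a (i + (k + 1)))"
        using fwd[of "i + k + 1"] i by simp
    qed (use small e C J in auto)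
    then have "a J \<le> ?L ^ (J - i) * e"
      using True by simp
    also have "\<dots> \<le> ?L ^ m * e"
      using J by (intro mono) auto
    finally show ?thesis .
  next
    case False
    have "a (i + 1 - (i + 1 - J)) \<le> ?L ^ (i + 1 - J) * e"
    proof (rule recurrence_growth_bound[of "\<lambda>k. a (i + 1 - k)" e C i])
      fix k assume "k + 2 \<le> i"
      then show "a (i + 1 - (k + 2)) \<le> C * (a (i + 1 - k) + a (i + 1 - (k + 1)))"
        using bwd[of "i - k"] i by (simp add: Suc_diff_le add.commute)
    qed (use small e C J False in auto)
    then have "a J \<le> ?L ^ (i + 1 - J) * e"
      using False by simp
    also have "\<dots> \<le> ?L ^ m * e"
      using i J by (intro mono) auto
    finally show ?thesis .
  qed
qed

lemma growth_factor_le_pow10: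
  fixes K \<beta> :: real
  assumes "0 \<le> K" "2 * K + 2 \<le> \<beta>"
  shows "2 * (\<beta> ^ 5 * K) + 1 \<le> \<beta> ^ 10"
proof -
  have "1 \<le> \<beta>"
    using assms by simp
  then have "\<beta> \<le> \<beta> ^ 5" "1 \<le> \<beta> ^ 5"
    using power_increasing[of 1 5 \<beta>] by auto
  then have "\<beta> ^ 5 * (2 * K + 2) \<le> \<beta> ^ 5 * \<beta> ^ 5"
    using assms by (intro mult_left_mono) auto
  then show ?thesis
    using \<open>1 \<le> \<beta> ^ 5\<close> by (simp add: algebra_simps flip: power_add)
qed

lemma adjacent_blocknorms_lower_bound:
  assumes K: "0 \<le> K" "2 * K + 2 \<le> real b" and E: "eventE K z b m D U T"
    and orth: "orth_to (m*b) v (H1 b m D U T z)" and v: "vnorm (m*b) v = 1"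
    and i: "1 \<le> i" "i < m"
  shows "1 / (real b ^ (10 * m) * sqrt (real m)) \<le> blocknorm b v i
       \<or> 1 / (real b ^ (10 * m) * sqrt (real m)) \<le> blocknorm b v (i + 1)"
proof (rule ccontr)
  define \<epsilon> where "\<epsilon> = 1 / (real b ^ (10 * m) * sqrt (real m))"
  define e where "e = max (blocknorm b v i) (blocknorm b v (i + 1))"
  define L where "L = 2 * (real b ^ 5 * K) + 1"
  assume "\<not> ?thesis"
  then have e_less: "e < \<epsilon>"
    unfolding e_def \<epsilon>_def by auto
  have b: "0 < b"
    using K by simp
  have nonneg: "0 \<le> blocknorm b v J" for J
    by (simp add: blocknorm_def vnorm_nonneg)
  then have e_nonneg: "0 \<le> e"
    unfolding e_def by (simp add: le_max_iff_disj)
  have bound: "blocknorm b v J \<le> L ^ m * e" if "J \<in> {1..m}" for J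
    unfolding L_def
    by (rule two_sided_recurrence_bound[where a = "blocknorm b v"])
      (use blocknorm_recurrences[OF E orth b] i K that e_nonneg in \<open>auto simp: e_def\<close>)
  have "L ^ m * e < real b ^ (10 * m) * \<epsilon>"
  proof -
    have "L ^ m \<le> (real b ^ 10) ^ m"
      unfolding L_def using K growth_factor_le_pow10 by (intro power_mono) auto
    then have "L ^ m * e \<le> (real b ^ 10) ^ m * e"
      using e_nonneg by (intro mult_right_mono)
    also have "\<dots> < (real b ^ 10) ^ m * \<epsilon>"
      using e_less b by simp
    finally show ?thesis
      by (simp add: power_mult)
  qed
  have "1 = (vnorm (m*b) v)\<^sup>2"
    using v by simp
  also have "\<dots> = (\<Sum>J=1..m. (blocknorm b v J)\<^sup>2)"
    by (rule vnorm_squared_blocknorms)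
  also have "\<dots> \<le> (\<Sum>J=1..m. (L ^ m * e)\<^sup>2)"
    using bound nonneg by (intro sum_mono power_mono) auto
  also have "\<dots> < real m * (real b ^ (10 * m) * \<epsilon>)\<^sup>2"
    using \<open>L ^ m * e < _\<close> i e_nonneg K unfolding L_def
    by (simp add: power_strict_mono)
  also have "\<dots> = 1"
    using b i by (simp add: \<epsilon>_def power_divide)
  finally show False
    by simp
qed

lemma adjacent_blocknorms_lower_bound_large_n:
  assumes K: "0 \<le> K" and n: "nat \<lceil>2 * K + 2\<rceil> ^ 2 \<le> n" "b dvd n" "m = n div b" "m \<le> b"
    and E: "eventE K z b m D U T" and v: "vnorm n v = 1" and orth: "orth_to n v (H1 b m D U T z)"
    and i: "i \<in> {1..m - 1}"
  shows "1 / (real b ^ (10 * m) * sqrt (real m)) \<le> blocknorm b v i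
       \<or> 1 / (real b ^ (10 * m) * sqrt (real m)) \<le> blocknorm b v (i + 1)"
proof -
  have nmb: "n = m * b"
    using n(2,3) by simp
  have "nat \<lceil>2 * K + 2\<rceil> ^ 2 \<le> b ^ 2"
    using n(1,4) unfolding nmb by (simp add: power2_eq_square order_trans)
  then have "nat \<lceil>2 * K + 2\<rceil> \<le> b"
    by (rule power2_le_imp_le) simp
  then have "2 * K + 2 \<le> real b"
    by linarith
  then show ?thesis
    using i by (intro adjacent_blocknorms_lower_bound[OF K _ E orth[unfolded nmb] v[unfolded nmb]]) auto
qed

theorem proposition2p6:
  "\<exists>m0::nat. \<forall>K::real. K > 0 \<longrightarrow> (\<forall>z::complex. \<exists>N::nat.
     \<forall>n b m Dt Ut Tt v. n \<ge> N \<longrightarrow> b dvd n \<longrightarrow> m = n div b \<longrightarrow> m0 \<le> m \<longrightarrow> m \<le> b \<longrightarrow>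
       eventE K z b m (scaleb b Dt) (scaleb b Ut) (scaleb b Tt) \<longrightarrow>
       vnorm n v = 1 \<longrightarrow>
       orth_to n v (H1 b m (scaleb b Dt) (scaleb b Ut) (scaleb b Tt) z) \<longrightarrow>
       (\<forall>i\<in>{1..m-1}.
          blocknorm b v i \<ge> 1 / (real b ^ (10 * m) * sqrt (real m)) \<or>
          blocknorm b v (i + 1) \<ge> 1 / (real b ^ (10 * m) * sqrt (real m))))"
  \<comment> \<open>No lower bound on m is needed (m0 = 0); n \<ge> N forces b^2 \<ge> m b = n \<ge> N, hence b \<ge> 2 K + 2.\<close>
  apply (rule exI[of _ 0], intro allI impI)
  subgoal for K z
    by (rule exI[of _ "nat \<lceil>2 * K + 2\<rceil> ^ 2"], intro allI impI ballI adjacent_blocknorms_lower_bound_large_n) auto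
  done

end
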